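(* Let $F$ be $\mathbb{C}$ or $\mathbb{R}$ and let $\mathfrak{L}$ be a solvable (left) Leibniz algebra over $F$ whose nilradical is the $r$-dimensional abelian algebra $A(r)$ with basis $n_1,\dots,n_r$. Choose elements $x_1,\dots,x_s\in\mathfrak{L}\setminus A(r)$ so that $\{n_1,\dots,n_r,x_1,\dots,x_s\}$ is a basis of $\mathfrak{L}$, and write the products as $$[x_\alpha,n_i]=\sum_{j=1}^r L^\alpha_{ij}n_j,\qquad [n_i,x_\alpha]=\sum_{j=1}^r R^\alpha_{ij}n_j,\qquad [x_\alpha,x_\beta]=\sum_{j=1}^r\sigma^{\alpha\beta}_j n_j,$$ with $L^\alpha,R^\alpha\in F^{r\times r}$ and $\sigma^{\alpha\beta}_j\in F$, for $1\le\alpha,\beta\le s$, $1\le i\le r$. Let $\sigma^{\alpha\beta}=(\sigma^{\alpha\beta}_1,\dots,\sigma^{\alpha\beta}_r)^T\in F^r$. Then for all $\alpha,\beta,\gamma\in\{1,\dots,s\}$, both $\sigma^{\alpha\alpha}$ and $\sigma^{\alpha\beta}+\sigma^{\beta\alpha}$ lie in the null space of $(R^\gamma)^T$, i.e. $(R^\gamma)^T\sigma^{\alpha\alpha}=0$ and $(R^\gamma)^T(\sigma^{\alpha\beta}+\sigma^{\beta\alpha})=0$.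
   Context: A (left) Leibniz algebra is a vector space with a bilinear product $[\cdot,\cdot]$ satisfying $[x,[y,z]]=[[x,y],z]+[y,[x,z]]$ for all $x,y,z$. It is solvable if its derived series $\mathfrak{L}^{(1)}=[\mathfrak{L},\mathfrak{L}]$, $\mathfrak{L}^{(n+1)}=[\mathfrak{L}^{(n)},\mathfrak{L}^{(n)}]$ eventually vanishes; nilpotent if the lower central series $\mathfrak{L}^2=[\mathfrak{L},\mathfrak{L}]$, $\mathfrak{L}^{n+1}=[\mathfrak{L},\mathfrak{L}^n]$ eventually vanishes. The nilradical is the unique maximal nilpotent ideal. $A(r)$ denotes the $r$-dimensional algebra with all products zero. *)

theory Defs
  imports Complex_Main
begin

definition bilinear_prod :: "('f::field \<Rightarrow> 'v::ab_group_add \<Rightarrow> 'v) \<Rightarrow> ('v \<Rightarrow> 'v \<Rightarrow> 'v) \<Rightarrow> bool" where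
  "bilinear_prod scale br \<longleftrightarrow>
     (\<forall>x y z. br (x + y) z = br x z + br y z) \<and>
     (\<forall>x y z. br x (y + z) = br x y + br x z) \<and>
     (\<forall>c x y. br (scale c x) y = scale c (br x y)) \<and>
     (\<forall>c x y. br x (scale c y) = scale c (br x y))"

definition leibniz_algebra :: "('f::field \<Rightarrow> 'v::ab_group_add \<Rightarrow> 'v) \<Rightarrow> ('v \<Rightarrow> 'v \<Rightarrow> 'v) \<Rightarrow> bool" where
  "leibniz_algebra scale br \<longleftrightarrow>
     vector_space scale \<and> bilinear_prod scale br \<and>
     (\<forall>x y z. br x (br y z) = br (br x y) z + br y (br x z))"

definition prod_sub :: "('f::field \<Rightarrow> 'v::ab_group_add \<Rightarrow> 'v) \<Rightarrow> ('v \<Rightarrow> 'v \<Rightarrow> 'v) \<Rightarrow> 'v set \<Rightarrow> 'v set \<Rightarrow> 'v set" where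
  "prod_sub scale br A B = module.span scale {br a b | a b. a \<in> A \<and> b \<in> B}"

fun derived :: "('f::field \<Rightarrow> 'v::ab_group_add \<Rightarrow> 'v) \<Rightarrow> ('v \<Rightarrow> 'v \<Rightarrow> 'v) \<Rightarrow> 'v set \<Rightarrow> nat \<Rightarrow> 'v set" where
  "derived scale br S 0 = S"
| "derived scale br S (Suc n) = prod_sub scale br (derived scale br S n) (derived scale br S n)"

text \<open>Lower central series of a subalgebra S: S^1 = S, S^(n+1) = [S, S^n]
  (index k here corresponds to S^(k+1)).\<close>
fun lower_central :: "('f::field \<Rightarrow> 'v::ab_group_add \<Rightarrow> 'v) \<Rightarrow> ('v \<Rightarrow> 'v \<Rightarrow> 'v) \<Rightarrow> 'v set \<Rightarrow> nat \<Rightarrow> 'v set" where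
  "lower_central scale br S 0 = S"
| "lower_central scale br S (Suc n) = prod_sub scale br S (lower_central scale br S n)"

definition solvable_alg :: "('f::field \<Rightarrow> 'v::ab_group_add \<Rightarrow> 'v) \<Rightarrow> ('v \<Rightarrow> 'v \<Rightarrow> 'v) \<Rightarrow> bool" where
  "solvable_alg scale br \<longleftrightarrow> (\<exists>n. derived scale br UNIV n = {0})"

definition nilpotent_sub :: "('f::field \<Rightarrow> 'v::ab_group_add \<Rightarrow> 'v) \<Rightarrow> ('v \<Rightarrow> 'v \<Rightarrow> 'v) \<Rightarrow> 'v set \<Rightarrow> bool" where
  "nilpotent_sub scale br S \<longleftrightarrow> (\<exists>n. lower_central scale br S n = {0})"

definition is_ideal :: "('f::field \<Rightarrow> 'v::ab_group_add \<Rightarrow> 'v) \<Rightarrow> ('v \<Rightarrow> 'v \<Rightarrow> 'v) \<Rightarrow> 'v set \<Rightarrow> bool" where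
  "is_ideal scale br I \<longleftrightarrow> module.subspace scale I \<and>
     (\<forall>x y. y \<in> I \<longrightarrow> br x y \<in> I \<and> br y x \<in> I)"

definition is_nilradical :: "('f::field \<Rightarrow> 'v::ab_group_add \<Rightarrow> 'v) \<Rightarrow> ('v \<Rightarrow> 'v \<Rightarrow> 'v) \<Rightarrow> 'v set \<Rightarrow> bool" where
  "is_nilradical scale br N \<longleftrightarrow> is_ideal scale br N \<and> nilpotent_sub scale br N \<and>
     (\<forall>J. is_ideal scale br J \<and> nilpotent_sub scale br J \<and> N \<subseteq> J \<longrightarrow> J = N)"

text \<open>Field isomorphism (used to say F is R or C up to isomorphism).\<close>
definition field_iso :: "('a::field \<Rightarrow> 'b::field) \<Rightarrow> bool" where
  "field_iso \<phi> \<longleftrightarrow> bij \<phi> \<and> (\<forall>a b. \<phi> (a + b) = \<phi> a + \<phi> b) \<and>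
     (\<forall>a b. \<phi> (a * b) = \<phi> a * \<phi> b) \<and> \<phi> 1 = 1"

end

theory Submission
  imports Defs
begin

text \<open>In a left Leibniz algebra the Leibniz identity with x = y gives [[a,a],z] = 0, and by
  polarisation also [[a,b] + [b,a], z] = 0. Taking a, b, z among the x's and expanding the
  left factor in the basis n_1, ..., n_r, the coefficient of n_k in the product is the k-th entry
  of the transposed matrix R^gamma applied to sigma^(alpha beta) + sigma^(beta alpha); it
  vanishes by linear independence of the n_i. Neither the field, solvability, the nilradical
  nor the products [x,n] play any role.\<close>

lemma bilinear_prod_add_left:
  assumes "bilinear_prod scale br"
  shows "br (x + y) z = br x z + br y z"
  using assms unfolding bilinear_prod_def by blast

lemma bilinear_prod_add_right:
  assumes "bilinear_prod scale br"
  shows "br z (x + y) = br z x + br z y"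
  using assms unfolding bilinear_prod_def by blast

lemma bilinear_prod_sum_left:
  assumes "bilinear_prod scale br" "finite A"
  shows "br (sum f A) z = (\<Sum>i\<in>A. br (f i) z)"
  using assms(2)
proof (induction rule: finite_induct)
  case empty
  have "br (0 + 0) z = br 0 z + br 0 z" by (rule bilinear_prod_add_left[OF assms(1)])
  then show ?case by simp
next
  case (insert a A)
  then show ?case by (simp add: bilinear_prod_add_left[OF assms(1)])
qed

lemma leibniz_square_mult_left_zero:
  assumes "leibniz_algebra scale br"
  shows "br (br a a) z = 0"
proof -
  have "br a (br a z) = br (br a a) z + br a (br a z)"
    using assms unfolding leibniz_algebra_def by blast
  then show ?thesis by simp
qed

lemma leibniz_symmetrized_mult_left_zero:
  assumes leib: "leibniz_algebra scale br"
  shows "br (br a b + br b a) z = 0"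
proof -
  have bp: "bilinear_prod scale br"
    using leib unfolding leibniz_algebra_def by blast
  note add = bilinear_prod_add_left[OF bp] bilinear_prod_add_right[OF bp]
  have "br (br (a + b) (a + b)) z
      = br (br a a) z + br (br a b + br b a) z + br (br b b) z"
    by (simp add: add algebra_simps)
  then show ?thesis
    by (simp add: leibniz_square_mult_left_zero[OF leib])
qed

lemma mult_right_in_basis_coordinates:
  fixes r :: nat
  assumes vs: "vector_space scale" and bp: "bilinear_prod scale br"
    and prod: "\<forall>i \<in> {1..r}. br (n i) y = (\<Sum>j = 1..r. scale (R i j) (n j))"
  shows "br (\<Sum>i = 1..r. scale (c i) (n i)) y
       = (\<Sum>k = 1..r. scale (\<Sum>j = 1..r. R j k * c j) (n k))"
proof -
  interpret vector_space scale by (rule vs)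
  have "br (\<Sum>i = 1..r. scale (c i) (n i)) y = (\<Sum>i = 1..r. br (scale (c i) (n i)) y)"
    by (rule bilinear_prod_sum_left[OF bp]) simp
  also have "\<dots> = (\<Sum>i = 1..r. scale (c i) (\<Sum>k = 1..r. scale (R i k) (n k)))"
    using bp prod unfolding bilinear_prod_def by (intro sum.cong) auto
  also have "\<dots> = (\<Sum>i = 1..r. \<Sum>k = 1..r. scale (c i * R i k) (n k))"
    by (simp add: scale_sum_right)
  also have "\<dots> = (\<Sum>k = 1..r. \<Sum>i = 1..r. scale (c i * R i k) (n k))"
    by (rule sum.swap)
  also have "\<dots> = (\<Sum>k = 1..r. scale (\<Sum>j = 1..r. R j k * c j) (n k))"
    by (simp add: scale_sum_left mult.commute)
  finally show ?thesis .
qed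

lemma independent_family_coeffs_zero:
  assumes vs: "vector_space scale" and fin: "finite I" and inj: "inj_on n I"
    and ind: "\<not> module.dependent scale (n ` I)"
    and zero: "(\<Sum>i\<in>I. scale (d i) (n i)) = 0" and k: "k \<in> I"
  shows "d k = 0"
proof -
  interpret vector_space scale by (rule vs)
  define u where "u = d \<circ> inv_into I n"
  have "(\<Sum>v\<in>n ` I. scale (u v) v) = (\<Sum>i\<in>I. scale (d i) (n i))"
    using inj by (simp add: sum.reindex u_def)
  with zero have "(\<Sum>v\<in>n ` I. scale (u v) v) = 0" by simp
  then have "u (n k) = 0"
    using independentD[OF ind, of "n ` I" u "n k"] fin k by auto
  then show ?thesis
    using inj k by (simp add: u_def)
qed

theorem lemma3p1:
  fixes scale :: "'f::field \<Rightarrow> 'v::ab_group_add \<Rightarrow> 'v"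
    and br :: "'v \<Rightarrow> 'v \<Rightarrow> 'v"
    and r s :: nat
    and n x :: "nat \<Rightarrow> 'v"
    and L R :: "nat \<Rightarrow> nat \<Rightarrow> nat \<Rightarrow> 'f"
    and \<sigma> :: "nat \<Rightarrow> nat \<Rightarrow> nat \<Rightarrow> 'f"
  assumes F_RC: "(\<exists>\<phi>::'f \<Rightarrow> real. field_iso \<phi>) \<or> (\<exists>\<phi>::'f \<Rightarrow> complex. field_iso \<phi>)"
    and leib: "leibniz_algebra scale br"
    and solv: "solvable_alg scale br"
    and nilrad: "is_nilradical scale br (module.span scale (n ` {1..r}))"
    and abelian: "\<forall>u \<in> module.span scale (n ` {1..r}). \<forall>v \<in> module.span scale (n ` {1..r}). br u v = 0"
    and inj_n: "inj_on n {1..r}"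
    and inj_x: "inj_on x {1..s}"
    and disj: "n ` {1..r} \<inter> x ` {1..s} = {}"
    and x_notin: "\<forall>\<alpha> \<in> {1..s}. x \<alpha> \<notin> module.span scale (n ` {1..r})"
    and indep: "\<not> module.dependent scale (n ` {1..r} \<union> x ` {1..s})"
    and spanning: "module.span scale (n ` {1..r} \<union> x ` {1..s}) = UNIV"
    and prodL: "\<forall>\<alpha> \<in> {1..s}. \<forall>i \<in> {1..r}. br (x \<alpha>) (n i) = (\<Sum>j = 1..r. scale (L \<alpha> i j) (n j))"
    and prodR: "\<forall>\<alpha> \<in> {1..s}. \<forall>i \<in> {1..r}. br (n i) (x \<alpha>) = (\<Sum>j = 1..r. scale (R \<alpha> i j) (n j))"
    and prodS: "\<forall>\<alpha> \<in> {1..s}. \<forall>\<beta> \<in> {1..s}. br (x \<alpha>) (x \<beta>) = (\<Sum>j = 1..r. scale (\<sigma> \<alpha> \<beta> j) (n j))"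
  shows "\<forall>\<alpha> \<in> {1..s}. \<forall>\<beta> \<in> {1..s}. \<forall>\<gamma> \<in> {1..s}. \<forall>k \<in> {1..r}.
           (\<Sum>j = 1..r. R \<gamma> j k * \<sigma> \<alpha> \<alpha> j) = 0 \<and>
           (\<Sum>j = 1..r. R \<gamma> j k * (\<sigma> \<alpha> \<beta> j + \<sigma> \<beta> \<alpha> j)) = 0"
proof (intro ballI conjI)
  fix \<alpha> \<beta> \<gamma> k assume \<alpha>: "\<alpha> \<in> {1..s}" and \<beta>: "\<beta> \<in> {1..s}" and \<gamma>: "\<gamma> \<in> {1..s}"
    and k: "k \<in> {1..r}"
  have vs: "vector_space scale" and bp: "bilinear_prod scale br"
    using leib unfolding leibniz_algebra_def by auto
  interpret vector_space scale by (rule vs)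
  have ind: "\<not> dependent (n ` {1..r})"
    using indep dependent_mono by blast
  have coeffs_zero: "(\<Sum>j = 1..r. R \<gamma> j k * c j) = 0"
    if "br (\<Sum>j = 1..r. scale (c j) (n j)) (x \<gamma>) = 0" for c
    using that mult_right_in_basis_coordinates[OF vs bp, of r n "x \<gamma>" "R \<gamma>" c] prodR \<gamma>
    by (intro independent_family_coeffs_zero[OF vs _ inj_n ind _ k]) auto
  show "(\<Sum>j = 1..r. R \<gamma> j k * \<sigma> \<alpha> \<alpha> j) = 0"
    using leibniz_square_mult_left_zero[OF leib, of "x \<alpha>" "x \<gamma>"] prodS \<alpha>
    by (intro coeffs_zero) simp
  have "br (x \<alpha>) (x \<beta>) + br (x \<beta>) (x \<alpha>) = (\<Sum>j = 1..r. scale (\<sigma> \<alpha> \<beta> j + \<sigma> \<beta> \<alpha> j) (n j))"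
    using prodS \<alpha> \<beta> by (simp add: scale_left_distrib sum.distrib)
  then show "(\<Sum>j = 1..r. R \<gamma> j k * (\<sigma> \<alpha> \<beta> j + \<sigma> \<beta> \<alpha> j)) = 0"
    using leibniz_symmetrized_mult_left_zero[OF leib, of "x \<alpha>" "x \<beta>" "x \<gamma>"]
    by (intro coeffs_zero) simp
qed

end
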